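(* Let $\mathbf X=(X_1,\dots,X_d)$ be a random vector whose copula $C$ is in the domain of attraction of a multivariate extreme value distribution $G$, and suppose there is an index $\kappa\in\{1,\dots,d\}$ with $\omega(F_\kappa)=:\omega^*$ such that $\lim_{s\uparrow\omega^*}\frac{1-F_i(s)}{1-F_\kappa(s)}=\gamma_i\in[0,\infty)$ for all $1\le i\le d$. Let $p_k:=\lim_{s\uparrow\omega^*}P(N_s=k\mid N_s>0)$, $1\le k\le d$ (these limits exist under the stated assumptions). Put $I:=\{i\in\{1,\dots,d\}:\gamma_i=0\}$ and $m^*:=d-|I|$. Then $\sum_{k=m}^d p_k=0$ for every $m$ with $m^*<m\le d$.
   Context: $F_i$ is the distribution function of $X_i$; the copula $C$ of $\mathbf X$ is the distribution function on $[0,1]^d$ with uniform margins such that $\mathbf X$ has the law of $(F_1^{-1}(U_1),\dots,F_d^{-1}(U_d))$, $\mathbf U\sim C$, with $F^{-1}(q)=\inf\{t:F(t)\ge q\}$. $\omega(F)=\sup\{t:F(t)<1\}$. "$C$ is in the domain of attraction of $G$" means $C^n(1+x_1/n,\dots,1+x_d/n)\to G(\mathbf x)$ for all $\mathbf x\le\mathbf 0$. $N_s:=\sum_{i=1}^d 1_{(s,\infty)}(X_i)$. *)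

theory Defs
  imports "HOL-Probability.Probability"
begin

definition dfun :: "'a measure \<Rightarrow> ('a \<Rightarrow> real) \<Rightarrow> real \<Rightarrow> real" where
  "dfun M Y t = measure M {x \<in> space M. Y x \<le> t}"

definition gen_inverse :: "(real \<Rightarrow> real) \<Rightarrow> real \<Rightarrow> real" where
  "gen_inverse F q = Inf {t. F t \<ge> q}"

definition right_endpoint :: "(real \<Rightarrow> real) \<Rightarrow> ereal" where
  "right_endpoint F = Sup (ereal ` {t. F t < 1})"

definition upto :: "ereal \<Rightarrow> real filter" where
  "upto w = (if w = \<infinity> then at_top else at_left (real_of_ereal w))"

definition is_copula_of ::
  "'a measure \<Rightarrow> (nat \<Rightarrow> 'a \<Rightarrow> real) \<Rightarrow> nat \<Rightarrow> ((nat \<Rightarrow> real) \<Rightarrow> real) \<Rightarrow> bool" where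
  "is_copula_of M X d C \<longleftrightarrow>
    (\<exists>Q. prob_space Q \<and> sets Q = sets (PiM {1..d} (\<lambda>_. borel)) \<and>
       (\<forall>i\<in>{1..d}. \<forall>t. measure Q {v \<in> space Q. v i \<le> t} = max 0 (min 1 t)) \<and>
       (\<forall>u. C u = measure Q {v \<in> space Q. \<forall>i\<in>{1..d}. v i \<le> u i}) \<and>
       distr M (PiM {1..d} (\<lambda>_. borel)) (\<lambda>x. \<lambda>i\<in>{1..d}. X i x) =
       distr Q (PiM {1..d} (\<lambda>_. borel)) (\<lambda>v. \<lambda>i\<in>{1..d}. gen_inverse (dfun M (X i)) (v i)))"

definition is_std_mevd :: "nat \<Rightarrow> ((nat \<Rightarrow> real) \<Rightarrow> real) \<Rightarrow> bool" where
  "is_std_mevd d G \<longleftrightarrow>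
    (\<exists>P. prob_space P \<and> sets P = sets (PiM {1..d} (\<lambda>_. borel)) \<and>
       (\<forall>x. G x = measure P {v \<in> space P. \<forall>i\<in>{1..d}. v i \<le> x i})) \<and>
    (\<forall>i\<in>{1..d}. \<forall>t\<le>0. G (\<lambda>j. if j = i then t else 0) = exp t) \<and>
    (\<forall>x n. (\<forall>i\<in>{1..d}. x i \<le> 0) \<and> n \<ge> 1 \<longrightarrow> G (\<lambda>i. x i / real n) ^ n = G x)"

definition in_DoA :: "nat \<Rightarrow> ((nat \<Rightarrow> real) \<Rightarrow> real) \<Rightarrow> ((nat \<Rightarrow> real) \<Rightarrow> real) \<Rightarrow> bool" where
  "in_DoA d C G \<longleftrightarrow>
    (\<forall>x. (\<forall>i\<in>{1..d}. x i \<le> 0) \<longrightarrow>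
       (\<lambda>n. C (\<lambda>i. 1 + x i / real n) ^ n) \<longlonglongrightarrow> G x)"

definition exceed_count :: "(nat \<Rightarrow> 'a \<Rightarrow> real) \<Rightarrow> nat \<Rightarrow> real \<Rightarrow> 'a \<Rightarrow> nat" where
  "exceed_count X d s x = card {i \<in> {1..d}. X i x > s}"

definition cond_count_prob :: "'a measure \<Rightarrow> (nat \<Rightarrow> 'a \<Rightarrow> real) \<Rightarrow> nat \<Rightarrow> real \<Rightarrow> nat \<Rightarrow> real" where
  "cond_count_prob M X d s k =
     measure M {x \<in> space M. exceed_count X d s x = k \<and> exceed_count X d s x > 0} /
     measure M {x \<in> space M. exceed_count X d s x > 0}"

end

theory Submission
  imports Defs
begin

text \<open>If \<open>N\<^sub>s = k > m* = d - |I|\<close>, then by counting some \<open>X\<^sub>i\<close> with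
  \<open>i \<in> I\<close> exceeds \<open>s\<close>; since \<open>{X\<^sub>\<kappa> > s} \<subseteq> {N\<^sub>s > 0}\<close>, this gives
  \<open>P(N\<^sub>s = k | N\<^sub>s > 0) \<le> \<Sum>\<^sub>i\<^sub>\<in>\<^sub>I P(X\<^sub>i > s) / P(X\<^sub>\<kappa> > s) \<rightarrow> \<Sum>\<^sub>i\<^sub>\<in>\<^sub>I \<gamma>\<^sub>i = 0\<close>.
  So every \<open>p\<^sub>k\<close> with \<open>k > m*\<close> vanishes.\<close>

lemma dfun_mono:
  assumes "prob_space M" "X \<in> borel_measurable M" "s \<le> t"
  shows "dfun M X s \<le> dfun M X t"
proof -
  interpret prob_space M by fact
  show ?thesis
    unfolding dfun_def using assms(2,3) by (intro finite_measure_mono) auto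
qed

lemma measure_greater_eq_1_minus_dfun:
  assumes "prob_space M" "X \<in> borel_measurable M"
  shows "measure M {x \<in> space M. X x > t} = 1 - dfun M X t"
proof -
  interpret prob_space M by fact
  have "{x \<in> space M. X x > t} = space M - {x \<in> space M. X x \<le> t}" by auto
  moreover have "{x \<in> space M. X x \<le> t} \<in> sets M" using assms(2) by measurable
  ultimately show ?thesis by (simp add: prob_compl dfun_def)
qed

lemma right_endpoint_neq_MInfty:
  assumes "prob_space M" "X \<in> borel_measurable M"
  shows "right_endpoint (dfun M X) \<noteq> -\<infinity>"
proof
  assume "right_endpoint (dfun M X) = -\<infinity>"
  then have dfun_ge_1: "dfun M X t \<ge> 1" for t
    unfolding right_endpoint_def by (auto simp: Sup_eq_MInfty not_less)
  interpret real_distribution "distr M borel X"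
    using prob_space.real_distribution_distr[OF assms] .
  have cdf_eq: "cdf (distr M borel X) t = dfun M X t" for t
    unfolding cdf_def dfun_def using assms(2)
    by (subst measure_distr) (auto intro!: arg_cong[where f="measure M"])
  have "eventually (\<lambda>t. cdf (distr M borel X) t < 1/2) at_bot"
    using cdf_lim_at_bot by (rule order_tendstoD) simp
  then obtain t where "cdf (distr M borel X) t < 1/2"
    by (metis eventually_at_bot_linorder order_refl)
  with dfun_ge_1[of t] cdf_eq[of t] show False by simp
qed

lemma upto_neq_bot: "upto w \<noteq> bot"
  unfolding upto_def by auto

lemma eventually_upto_less: "w \<noteq> -\<infinity> \<Longrightarrow> eventually (\<lambda>s. ereal s < w) (upto w)"
proof (cases w)
  case (real r)
  then show ?thesis
    unfolding upto_def using eventually_at_left_real[of "r - 1" r]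
    by (auto elim: eventually_mono)
qed (simp_all add: upto_def)

lemma eventually_dfun_less_1:
  assumes "prob_space M" "X \<in> borel_measurable M"
  shows "eventually (\<lambda>s. dfun M X s < 1) (upto (right_endpoint (dfun M X)))"
  using eventually_upto_less[OF right_endpoint_neq_MInfty[OF assms]]
proof (rule eventually_mono)
  fix s assume "ereal s < right_endpoint (dfun M X)"
  then obtain t where "dfun M X t < 1" "s < t"
    unfolding right_endpoint_def by (auto simp: less_Sup_iff)
  with dfun_mono[OF assms, of s t] show "dfun M X s < 1" by simp
qed

lemma exceed_count_gt_imp_exceed_in:
  assumes "I \<subseteq> {1..d}" "d - card I < exceed_count X d s x"
  shows "\<exists>i\<in>I. X i x > s"
proof (rule ccontr)
  assume "\<not> ?thesis"
  then have "{i \<in> {1..d}. X i x > s} \<subseteq> {1..d} - I" by auto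
  then have "exceed_count X d s x \<le> card ({1..d} - I)"
    unfolding exceed_count_def by (intro card_mono) auto
  also have "\<dots> = d - card I"
    using assms(1) by (simp add: card_Diff_subset finite_subset)
  finally show False using assms(2) by simp
qed

lemma cond_count_prob_le:
  assumes "prob_space M" and X: "\<And>i. i \<in> {1..d} \<Longrightarrow> X i \<in> borel_measurable M"
    and "\<kappa> \<in> {1..d}" "I \<subseteq> {1..d}" "d - card I < k" "dfun M (X \<kappa>) s < 1"
  shows "cond_count_prob M X d s k \<le> (\<Sum>i\<in>I. (1 - dfun M (X i) s) / (1 - dfun M (X \<kappa>) s))"
proof -
  interpret prob_space M by fact
  define A where "A = {x \<in> space M. exceed_count X d s x = k \<and> exceed_count X d s x > 0}"
  define D where "D = {x \<in> space M. exceed_count X d s x > 0}"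
  define U where "U i = {x \<in> space M. X i x > s}" for i
  have U_sets: "U i \<in> sets M" if "i \<in> {1..d}" for i
    unfolding U_def using X[OF that] by measurable
  have measure_U: "measure M (U i) = 1 - dfun M (X i) s" if "i \<in> {1..d}" for i
    unfolding U_def using measure_greater_eq_1_minus_dfun[OF \<open>prob_space M\<close> X[OF that]] .
  have dfun_le_1: "dfun M (X i) s \<le> 1" if "i \<in> {1..d}" for i
    using measure_U[OF that] by (metis diff_ge_0_iff_ge measure_nonneg)
  have fin_I: "finite I" using assms(4) finite_subset by blast
  have "A \<subseteq> (\<Union>i\<in>I. U i)"
    using exceed_count_gt_imp_exceed_in[OF assms(4)] assms(5)
    unfolding A_def U_def by fastforce
  then have "measure M A \<le> measure M (\<Union>i\<in>I. U i)"
    using assms(4) U_sets fin_I by (intro finite_measure_mono) blast+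
  also have "\<dots> \<le> (\<Sum>i\<in>I. measure M (U i))"
    using assms(4) U_sets by (intro measure_UNION_le[OF fin_I]) blast
  also have "\<dots> = (\<Sum>i\<in>I. 1 - dfun M (X i) s)"
    using assms(4) measure_U by (intro sum.cong) auto
  finally have A_le: "measure M A \<le> (\<Sum>i\<in>I. 1 - dfun M (X i) s)" .
  have D_eq: "D = (\<Union>i\<in>{1..d}. U i)"
    unfolding D_def U_def exceed_count_def by (auto simp: card_gt_0_iff)
  have "measure M (U \<kappa>) \<le> measure M D"
    unfolding D_eq using assms(3) U_sets by (intro finite_measure_mono) blast+
  then have D_ge: "1 - dfun M (X \<kappa>) s \<le> measure M D"
    using measure_U[OF assms(3)] by simp
  have "cond_count_prob M X d s k = measure M A / measure M D"
    unfolding cond_count_prob_def A_def D_def ..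
  also have "\<dots> \<le> (\<Sum>i\<in>I. 1 - dfun M (X i) s) / measure M D"
    by (rule divide_right_mono[OF A_le]) simp
  also have "\<dots> \<le> (\<Sum>i\<in>I. 1 - dfun M (X i) s) / (1 - dfun M (X \<kappa>) s)"
    using assms(4,6) D_ge dfun_le_1 by (intro divide_left_mono sum_nonneg) auto
  finally show ?thesis by (simp add: sum_divide_distrib)
qed

lemma cond_count_prob_tendsto_0:
  assumes "prob_space M" and X: "\<And>i. i \<in> {1..d} \<Longrightarrow> X i \<in> borel_measurable M"
    and "\<kappa> \<in> {1..d}" "I \<subseteq> {1..d}" "d - card I < k"
    and ratio_0: "\<And>i. i \<in> I \<Longrightarrow>
           ((\<lambda>s. (1 - dfun M (X i) s) / (1 - dfun M (X \<kappa>) s)) \<longlongrightarrow> 0)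
             (upto (right_endpoint (dfun M (X \<kappa>))))"
  shows "((\<lambda>s. cond_count_prob M X d s k) \<longlongrightarrow> 0) (upto (right_endpoint (dfun M (X \<kappa>))))"
proof (rule tendsto_sandwich[OF _ _ tendsto_const tendsto_null_sum[OF ratio_0]])
  show "eventually (\<lambda>s. 0 \<le> cond_count_prob M X d s k) (upto (right_endpoint (dfun M (X \<kappa>))))"
    unfolding cond_count_prob_def by simp
  show "eventually (\<lambda>s. cond_count_prob M X d s k
          \<le> (\<Sum>i\<in>I. (1 - dfun M (X i) s) / (1 - dfun M (X \<kappa>) s)))
          (upto (right_endpoint (dfun M (X \<kappa>))))"
    using eventually_dfun_less_1[OF assms(1) X[OF assms(3)]]
    by (rule eventually_mono) (rule cond_count_prob_le[OF assms(1-5)], use X in auto)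
qed

theorem lemma4p1:
  fixes M :: "'a measure" and X :: "nat \<Rightarrow> 'a \<Rightarrow> real" and d \<kappa> :: nat
    and C G :: "(nat \<Rightarrow> real) \<Rightarrow> real" and \<gamma> :: "nat \<Rightarrow> real"
  assumes "prob_space M"
    and "\<And>i. i \<in> {1..d} \<Longrightarrow> X i \<in> borel_measurable M"
    and "is_copula_of M X d C"
    and "is_std_mevd d G"
    and "in_DoA d C G"
    and "\<kappa> \<in> {1..d}"
    and "\<And>i. i \<in> {1..d} \<Longrightarrow> \<gamma> i \<ge> 0"
    and "\<And>i. i \<in> {1..d} \<Longrightarrow>
           ((\<lambda>s. (1 - dfun M (X i) s) / (1 - dfun M (X \<kappa>) s)) \<longlongrightarrow> \<gamma> i)
             (upto (right_endpoint (dfun M (X \<kappa>))))"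
  shows "\<forall>m. d - card {i \<in> {1..d}. \<gamma> i = 0} < m \<and> m \<le> d \<longrightarrow>
           (\<Sum>k = m..d. Lim (upto (right_endpoint (dfun M (X \<kappa>))))
                              (\<lambda>s. cond_count_prob M X d s k)) = 0"
proof (intro allI impI)
  fix m assume m: "d - card {i \<in> {1..d}. \<gamma> i = 0} < m \<and> m \<le> d"
  have ratio_0: "((\<lambda>s. (1 - dfun M (X i) s) / (1 - dfun M (X \<kappa>) s)) \<longlongrightarrow> 0)
      (upto (right_endpoint (dfun M (X \<kappa>))))" if "i \<in> {i \<in> {1..d}. \<gamma> i = 0}" for i
    using assms(8)[of i] that by simp
  have "((\<lambda>s. cond_count_prob M X d s k) \<longlongrightarrow> 0) (upto (right_endpoint (dfun M (X \<kappa>))))"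
    if "m \<le> k" for k
    using m that ratio_0
    by (intro cond_count_prob_tendsto_0[OF assms(1,2,6), where I="{i \<in> {1..d}. \<gamma> i = 0}"]) auto
  then show "(\<Sum>k = m..d. Lim (upto (right_endpoint (dfun M (X \<kappa>))))
                              (\<lambda>s. cond_count_prob M X d s k)) = 0"
    by (intro sum.neutral) (auto intro: tendsto_Lim[OF upto_neq_bot])
qed

end
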